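(* Let $\mathfrak{g}$ be a nilpotent real Lie algebra endowed with a complex structure $J$. If the center $\xi$ of $\mathfrak{g}$ is not $J$-invariant, then $(\mathfrak{g},J)$ does not admit any SKT inner product.
   Context: A complex structure on $\mathfrak{g}$ is $J$ with $J^2=-\mathrm{Id}$ and $[X,Y]-[JX,JY]+J[JX,Y]+J[X,JY]=0$. A $J$-compatible inner product $g$ (i.e. $g(JX,JY)=g(X,Y)$) is SKT if the $3$-form $c(X,Y,Z)=-g([JX,JY],Z)-g([JY,JZ],X)-g([JZ,JX],Y)$ is closed under the Chevalley–Eilenberg differential, equivalently if the fundamental form $\omega=g(J\cdot,\cdot)$ satisfies $\partial\bar\partial\omega=0$. *)

theory Defs
  imports "HOL-Analysis.Analysis"
begin

text \<open>A (finite-dimensional) real Lie algebra is modelled as a bracket on a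
finite-dimensional real vector space (a type of class euclidean_space; its built-in
inner product plays no role).\<close>

definition lie_algebra :: "('a::real_vector \<Rightarrow> 'a \<Rightarrow> 'a) \<Rightarrow> bool" where
  "lie_algebra br \<longleftrightarrow> bilinear br \<and> (\<forall>x y. br x y = - br y x) \<and>
     (\<forall>x y z. br x (br y z) + br y (br z x) + br z (br x y) = 0)"

fun lower_central :: "('a::real_vector \<Rightarrow> 'a \<Rightarrow> 'a) \<Rightarrow> nat \<Rightarrow> 'a set" where
  "lower_central br 0 = UNIV"
| "lower_central br (Suc k) = span {br x y | x y. y \<in> lower_central br k}"

definition nilpotent_lie :: "('a::real_vector \<Rightarrow> 'a \<Rightarrow> 'a) \<Rightarrow> bool" where
  "nilpotent_lie br \<longleftrightarrow> (\<exists>k. lower_central br k = {0})"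

definition lie_center :: "('a::real_vector \<Rightarrow> 'a \<Rightarrow> 'a) \<Rightarrow> 'a set" where
  "lie_center br = {z. \<forall>x. br z x = 0}"

definition complex_structure :: "('a::real_vector \<Rightarrow> 'a \<Rightarrow> 'a) \<Rightarrow> ('a \<Rightarrow> 'a) \<Rightarrow> bool" where
  "complex_structure br J \<longleftrightarrow> linear J \<and> (\<forall>x. J (J x) = - x) \<and>
     (\<forall>x y. br x y - br (J x) (J y) + J (br (J x) y) + J (br x (J y)) = 0)"

definition compatible_inner :: "('a::real_vector \<Rightarrow> 'a) \<Rightarrow> ('a \<Rightarrow> 'a \<Rightarrow> real) \<Rightarrow> bool" where
  "compatible_inner J g \<longleftrightarrow> bilinear g \<and> (\<forall>x y. g x y = g y x) \<and>
     (\<forall>x. x \<noteq> 0 \<longrightarrow> g x x > 0) \<and> (\<forall>x y. g (J x) (J y) = g x y)"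

definition torsion_form ::
  "('a::real_vector \<Rightarrow> 'a \<Rightarrow> 'a) \<Rightarrow> ('a \<Rightarrow> 'a) \<Rightarrow> ('a \<Rightarrow> 'a \<Rightarrow> real) \<Rightarrow> 'a \<Rightarrow> 'a \<Rightarrow> 'a \<Rightarrow> real" where
  "torsion_form br J g X Y Z =
     - g (br (J X) (J Y)) Z - g (br (J Y) (J Z)) X - g (br (J Z) (J X)) Y"

text \<open>Chevalley--Eilenberg differential of a 3-form (trivial coefficients):
  d c (X0,..,X3) = sum_{i<j} (-1)^(i+j) c([Xi,Xj], X0,..,^Xi,..,^Xj,..,X3).\<close>
definition ce_d3 ::
  "('a::real_vector \<Rightarrow> 'a \<Rightarrow> 'a) \<Rightarrow> ('a \<Rightarrow> 'a \<Rightarrow> 'a \<Rightarrow> real) \<Rightarrow> 'a \<Rightarrow> 'a \<Rightarrow> 'a \<Rightarrow> 'a \<Rightarrow> real" where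
  "ce_d3 br c X0 X1 X2 X3 =
     - c (br X0 X1) X2 X3 + c (br X0 X2) X1 X3 - c (br X0 X3) X1 X2
     - c (br X1 X2) X0 X3 + c (br X1 X3) X0 X2 - c (br X2 X3) X0 X1"

definition is_SKT ::
  "('a::real_vector \<Rightarrow> 'a \<Rightarrow> 'a) \<Rightarrow> ('a \<Rightarrow> 'a) \<Rightarrow> ('a \<Rightarrow> 'a \<Rightarrow> real) \<Rightarrow> bool" where
  "is_SKT br J g \<longleftrightarrow> compatible_inner J g \<and>
     (\<forall>X0 X1 X2 X3. ce_d3 br (torsion_form br J g) X0 X1 X2 X3 = 0)"

end

theory Submission
  imports Defs
begin

text \<open>Let Z be central with P = JZ not central. Integrability of J together with
  [Z,-] = 0 shows that ad P commutes with J. Since the lower central series reaches 0,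
  there is a last level C^m on which ad P does not vanish; pick Y there with
  U = [P,Y] \<noteq> 0. Then ad P kills U and [Y,JY], both in C^(m+1), and evaluating the
  differential of the torsion form on (Z, P, Y, JY) gives -2 g(U,U) \<noteq> 0.\<close>

lemma lie_center_bracket_right:
  assumes "lie_algebra br" and "z \<in> lie_center br"
  shows "br x z = 0"
proof -
  have "br x z = - br z x"
    using assms(1) unfolding lie_algebra_def by blast
  then show ?thesis
    using assms(2) unfolding lie_center_def by simp
qed

lemma bracket_mem_lower_central_Suc:
  assumes "y \<in> lower_central br k"
  shows "br x y \<in> lower_central br (Suc k)"
  using assms by (auto intro: span_base)

lemma bracket_mem_lower_central_Suc_left:
  assumes "lie_algebra br" and "x \<in> lower_central br k"
  shows "br x y \<in> lower_central br (Suc k)"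
proof -
  have "br x y = - br y x"
    using assms(1) unfolding lie_algebra_def by blast
  moreover have "br y x \<in> lower_central br (Suc k)"
    using assms(2) by (rule bracket_mem_lower_central_Suc)
  ultimately show ?thesis
    by (simp add: span_neg)
qed

lemma complex_structure_bracket_center_image:
  assumes "complex_structure br J" and "z \<in> lie_center br"
  shows "br (J z) (J y) = J (br (J z) y)"
proof -
  have "linear J"
    and "br z y - br (J z) (J y) + J (br (J z) y) + J (br z (J y)) = 0"
    using assms(1) unfolding complex_structure_def by blast+
  then show ?thesis
    using assms(2) by (simp add: lie_center_def linear_0)
qed

lemma nilpotent_lie_last_nonvanishing_level:
  assumes "nilpotent_lie br" and "f 0 = 0" and "f y \<noteq> 0"
  obtains m Y where "Y \<in> lower_central br m" and "f Y \<noteq> 0"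
    and "\<And>v. v \<in> lower_central br (Suc m) \<Longrightarrow> f v = 0"
proof -
  define S where "S k \<longleftrightarrow> (\<exists>v\<in>lower_central br k. f v \<noteq> 0)" for k
  have "S 0"
    using assms(3) unfolding S_def by auto
  moreover obtain k where "lower_central br k = {0}"
    using assms(1) unfolding nilpotent_lie_def by blast
  then have "\<not> S k"
    using assms(2) unfolding S_def by simp
  ultimately have "\<exists>m. S m \<and> \<not> S (Suc m)"
  proof (induction k)
    case (Suc k)
    then show ?case by blast
  qed simp
  then show thesis
    using that unfolding S_def by blast
qed

text \<open>Of the six terms of the differential only those containing U = [JZ,Y] survive,
  and by the Jacobi identity they add up to -2 g(U,U).\<close>

lemma ce_d3_torsion_form_center:
  assumes "lie_algebra br" and "complex_structure br J" and "compatible_inner J g"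
    and "z \<in> lie_center br"
    and kill_U: "br (J z) (br (J z) y) = 0"
    and kill_V: "br (J z) (br y (J y)) = 0"
  shows "ce_d3 br (torsion_form br J g) z (J z) y (J y) =
    - 2 * g (br (J z) y) (br (J z) y)"
proof -
  define P U V c where "P = J z" and "U = br P y" and "V = br y (J y)"
    and "c = torsion_form br J g"
  have bb: "bilinear br" and anti: "\<And>x y. br x y = - br y x"
    and jac: "\<And>x y w. br x (br y w) + br y (br w x) + br w (br x y) = 0"
    using assms(1) unfolding lie_algebra_def by blast+
  have "linear J" and JJ: "\<And>x. J (J x) = - x"
    using assms(2) unfolding complex_structure_def by blast+
  have gb: "bilinear g" and gJ: "\<And>x y. g (J x) (J y) = g x y"
    using assms(3) unfolding compatible_inner_def by blast+
  note bil = bilinear_lzero[OF bb] bilinear_rzero[OF bb] bilinear_lneg[OF bb]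
    bilinear_rneg[OF bb] bilinear_lzero[OF gb] bilinear_rzero[OF gb] bilinear_lneg[OF gb]
  have J0: "J 0 = 0"
    using \<open>linear J\<close> by (rule linear_0)
  have zl: "\<And>x. br z x = 0"
    using assms(4) unfolding lie_center_def by blast
  have zr: "\<And>x. br x z = 0"
    using lie_center_bracket_right[OF assms(1,4)] .
  have comm: "\<And>x. br P (J x) = J (br P x)"
    unfolding P_def using assms(2,4) by (rule complex_structure_bracket_center_image)
  have PU: "br P U = 0" and PV: "br P V = 0"
    using kill_U kill_V unfolding P_def U_def V_def .
  have PJY: "br P (J y) = J U" and PJU: "br P (J U) = 0" and PJV: "br P (J V) = 0"
    using comm[of y] comm[of U] comm[of V] PU PV J0 unfolding U_def by simp_all
  have jac_U: "br (J y) U = br y (J U)"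
  proof -
    have "br P V + br y (br (J y) P) + br (J y) U = 0"
      using jac[of P y "J y"] unfolding U_def V_def .
    moreover have "br (J y) P = - J U"
      using PJY anti[of "J y" P] by simp
    ultimately show ?thesis
      using PV bil by (simp add: add_eq_0_iff)
  qed
  have c0: "\<And>a b. c 0 a b = 0"
    unfolding c_def torsion_form_def using J0 bil by simp
  have cU: "c U z (J y) = g U U + g (br y (J U)) z"
    unfolding c_def torsion_form_def P_def[symmetric]
    using anti[of "J U" P] PJU JJ bil unfolding U_def by simp
  have cJU: "c (J U) z y = - g U U + g (br (J y) U) z"
    unfolding c_def torsion_form_def P_def[symmetric]
    using anti[of "- U" P] PU PJY JJ gJ bil by simp
  have cV: "c V z P = 0"
    unfolding c_def torsion_form_def P_def[symmetric]
    using JJ[of z] anti[of "J V" P] PJV zl zr bil unfolding P_def by simp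
  have "ce_d3 br c z P y (J y) = - c U z (J y) + c (J U) z y - c V z P"
    unfolding ce_d3_def using zl c0 PJY unfolding U_def V_def by simp
  also have "\<dots> = - 2 * g U U"
    using cU cJU cV jac_U by simp
  finally show ?thesis
    unfolding c_def P_def U_def .
qed

theorem proposition3p5:
  fixes br :: "'a::euclidean_space \<Rightarrow> 'a \<Rightarrow> 'a" and J :: "'a \<Rightarrow> 'a"
  assumes "lie_algebra br"
    and "nilpotent_lie br"
    and "complex_structure br J"
    and "\<not> (J ` lie_center br \<subseteq> lie_center br)"
  shows "\<not> (\<exists>g. is_SKT br J g)"
proof
  assume "\<exists>g. is_SKT br J g"
  then obtain g where g: "compatible_inner J g"
    and closed: "\<And>a b c d. ce_d3 br (torsion_form br J g) a b c d = 0"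
    unfolding is_SKT_def by blast
  obtain z x where z: "z \<in> lie_center br" and "br (J z) x \<noteq> 0"
    using assms(4) unfolding lie_center_def by blast
  moreover have "br (J z) 0 = 0"
    using assms(1) bilinear_rzero unfolding lie_algebra_def by blast
  ultimately obtain m y where y: "y \<in> lower_central br m" and U: "br (J z) y \<noteq> 0"
    and kill: "\<And>v. v \<in> lower_central br (Suc m) \<Longrightarrow> br (J z) v = 0"
    using nilpotent_lie_last_nonvanishing_level[OF assms(2)] by blast
  have "ce_d3 br (torsion_form br J g) z (J z) y (J y) = - 2 * g (br (J z) y) (br (J z) y)"
    using assms(1,3) g z by (rule ce_d3_torsion_form_center)
      (intro kill bracket_mem_lower_central_Suc[OF y]
        bracket_mem_lower_central_Suc_left[OF assms(1) y])+
  moreover have "g (br (J z) y) (br (J z) y) > 0"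
    using g U unfolding compatible_inner_def by blast
  ultimately show False
    using closed by simp
qed

end
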